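(* Let $\boldsymbol{u}^\star\in\mathbb{R}^n\setminus\{\boldsymbol{0}\}$ and $f(\boldsymbol{u})=\frac12\|\boldsymbol{u}\boldsymbol{u}^{\mathrm T}-\boldsymbol{u}^\star{\boldsymbol{u}^\star}^{\mathrm T}\|_1$ on $\mathbb{R}^n$. Let $\boldsymbol{u}$ be any spurious stationary point of $f$ and let $\boldsymbol{w}=\boldsymbol{u}^\star-\boldsymbol{u}$ or $\boldsymbol{w}=-\boldsymbol{u}^\star-\boldsymbol{u}$. Then: (i) $d^2f(\boldsymbol{u})(\boldsymbol{w})=-\|\boldsymbol{u}^\star\|_1^2<0$; (ii) $\inf_{\boldsymbol{z}\in\mathbb{R}^n}d^2f(\boldsymbol{u})(\boldsymbol{w}\,|\,\boldsymbol{z})=-\|\boldsymbol{u}^\star\|_1^2<0$, i.e. for every $\varepsilon>0$ there is $\boldsymbol{z}\in\mathbb{R}^n$ with $d^2f(\boldsymbol{u})(\boldsymbol{w}\,|\,\boldsymbol{z})<-\|\boldsymbol{u}^\star\|_1^2+\varepsilon$; (iii) $f''(\boldsymbol{u};\boldsymbol{w})=-\|\boldsymbol{u}^\star\|_1^2<0$.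
   Context: $\|\cdot\|_1$ is the entrywise $\ell_1$-norm. $df(\boldsymbol{x})(\boldsymbol{w})=\lim_{t\searrow0}(f(\boldsymbol{x}+t\boldsymbol{w})-f(\boldsymbol{x}))/t$ (directional derivative). Second subderivative (no $\boldsymbol{v}$): $d^2f(\boldsymbol{x})(\boldsymbol{w})=\liminf_{t\searrow0,\boldsymbol{w}'\to\boldsymbol{w}}\frac{f(\boldsymbol{x}+t\boldsymbol{w}')-f(\boldsymbol{x})-t\,df(\boldsymbol{x})(\boldsymbol{w}')}{t^2/2}$. Parabolic subderivative: $d^2f(\boldsymbol{x})(\boldsymbol{w}\,|\,\boldsymbol{z})=\liminf_{t\searrow0,\boldsymbol{z}'\to\boldsymbol{z}}\frac{f(\boldsymbol{x}+t\boldsymbol{w}+\frac12t^2\boldsymbol{z}')-f(\boldsymbol{x})-t\,df(\boldsymbol{x})(\boldsymbol{w})}{t^2/2}$. One-sided second directional derivative: $f''(\boldsymbol{x};\boldsymbol{w})=\lim_{t\searrow0}\frac{f(\boldsymbol{x}+t\boldsymbol{w})-f(\boldsymbol{x})-t\,df(\boldsymbol{x})(\boldsymbol{w})}{t^2/2}$. A point $\boldsymbol{u}$ is stationary if $\boldsymbol{0}\in\partial f(\boldsymbol{u})$, where $\partial f(\boldsymbol{u})=\{\boldsymbol{Z}\boldsymbol{u}:\boldsymbol{Z}\text{ symmetric}, \boldsymbol{Z}\in\operatorname{Sign}(\boldsymbol{u}\boldsymbol{u}^{\mathrm T}-\boldsymbol{u}^\star{\boldsymbol{u}^\star}^{\mathrm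 T})\}$ (entrywise set-valued sign, $\operatorname{Sign}(0)=[-1,1]$); it is spurious if additionally $\boldsymbol{u}\notin\{\pm\boldsymbol{u}^\star\}$. *)

theory Defs
  imports "HOL-Analysis.Analysis" "HOL-Library.Extended_Real"
begin

definition l1norm :: "real ^ 'n \<Rightarrow> real" where
  "l1norm v = (\<Sum>i\<in>UNIV. \<bar>v $ i\<bar>)"

definition rpca_f :: "real ^ 'n \<Rightarrow> real ^ 'n \<Rightarrow> real" where
  "rpca_f ustar u = (1/2) * (\<Sum>i\<in>UNIV. \<Sum>j\<in>UNIV. \<bar>u $ i * u $ j - ustar $ i * ustar $ j\<bar>)"

definition dirderiv :: "(real ^ 'n \<Rightarrow> real) \<Rightarrow> real ^ 'n \<Rightarrow> real ^ 'n \<Rightarrow> real" where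
  "dirderiv f x w = Lim (at_right 0) (\<lambda>t. (f (x + t *\<^sub>R w) - f x) / t)"

definition second_subderiv :: "(real ^ 'n \<Rightarrow> real) \<Rightarrow> real ^ 'n \<Rightarrow> real ^ 'n \<Rightarrow> ereal" where
  "second_subderiv f x w =
     Liminf (at_right 0 \<times>\<^sub>F nhds w)
       (\<lambda>(t, w'). ereal ((f (x + t *\<^sub>R w') - f x - t * dirderiv f x w') / (t\<^sup>2 / 2)))"

definition parabolic_subderiv ::
  "(real ^ 'n \<Rightarrow> real) \<Rightarrow> real ^ 'n \<Rightarrow> real ^ 'n \<Rightarrow> real ^ 'n \<Rightarrow> ereal" where
  "parabolic_subderiv f x w z =
     Liminf (at_right 0 \<times>\<^sub>F nhds z)
       (\<lambda>(t, z'). ereal ((f (x + t *\<^sub>R w + ((1/2) * t\<^sup>2) *\<^sub>R z') - f x - t * dirderiv f x w)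
                          / (t\<^sup>2 / 2)))"

definition Sign :: "real \<Rightarrow> real set" where
  "Sign a = (if a > 0 then {1} else if a < 0 then {-1} else {-1..1})"

definition rpca_subdiff :: "real ^ 'n \<Rightarrow> real ^ 'n \<Rightarrow> (real ^ 'n) set" where
  "rpca_subdiff ustar u =
     {Z *v u | Z :: real ^ 'n ^ 'n. transpose Z = Z \<and>
        (\<forall>i j. Z $ i $ j \<in> Sign (u $ i * u $ j - ustar $ i * ustar $ j))}"

definition stationary :: "real ^ 'n \<Rightarrow> real ^ 'n \<Rightarrow> bool" where
  "stationary ustar u \<longleftrightarrow> 0 \<in> rpca_subdiff ustar u"

definition spurious_stationary :: "real ^ 'n \<Rightarrow> real ^ 'n \<Rightarrow> bool" where
  "spurious_stationary ustar u \<longleftrightarrow> stationary ustar u \<and> u \<notin> {ustar, - ustar}"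

end

theory Submission
  imports Defs
begin

(* Write s for ustar. Stationarity of u provides a symmetric matrix Z with entries in
   Sign(u u^T - s s^T) and Z u = 0. Normalising to s >= 0 by flipping coordinate signs, a
   ratio argument on the rows of Z shows that a spurious stationary point satisfies
   |u_i| <= |s_i| and sum_i sgn(s_i) u_i = 0. Then no entry of v v^T - s s^T changes sign
   along the segment v = u + t (s - u), 0 <= t <= 1, and f is exactly quadratic there:
   f(u + t w) = f(u) - ||s||_1^2 t^2 / 2. This gives df(u)(w) = 0 and the value -||s||_1^2 of
   all three second-order quantities from above. The matching lower bounds come from
   |c + b t + a t^2| >= |c| + t |.|'(c; b) - t^2 |a| for the second subderivative and from
   pairing with Z, f(u + y) >= f(u) - ||y||_1^2 / 2, for the parabolic one, together with
   ||w||_1 = ||s||_1. The case w = -s - u is the case w = s - u for -s, since f only depends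
   on s s^T. *)

lemma Liminf_prod_nhds_le_const:
  assumes "F \<noteq> bot" and "\<forall>\<^sub>F t in F. g (t, v) = a"
  shows "Liminf (F \<times>\<^sub>F nhds v) g \<le> a"
proof -
  have le: "filtermap (\<lambda>t. (t, v)) F \<le> F \<times>\<^sub>F nhds v"
    using filterlim_Pair[OF filterlim_ident tendsto_const] unfolding filterlim_def .
  have "Liminf (F \<times>\<^sub>F nhds v) g \<le> Liminf (filtermap (\<lambda>t. (t, v)) F) g"
    unfolding Liminf_def by (intro SUP_subset_mono) (use le in \<open>auto simp: le_filter_def\<close>)
  also have "\<dots> \<le> Liminf F (\<lambda>t. g (t, v))"
    by (rule Liminf_filtermap_le)
  also have "\<dots> = Liminf F (\<lambda>t. a)"
    using assms(2) by (rule Liminf_eq)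
  also have "\<dots> = a"
    using assms(1) by (simp add: Liminf_const)
  finally show ?thesis .
qed

lemma Liminf_ge_limit:
  assumes "F \<noteq> bot" and "\<forall>\<^sub>F p in F. ereal (h p) \<le> g p" and "(h \<longlongrightarrow> L) F"
  shows "ereal L \<le> Liminf F g"
proof -
  have "Liminf F (\<lambda>p. ereal (h p)) = ereal L"
    using assms(1,3) by (intro lim_imp_Liminf) auto
  then show ?thesis
    using Liminf_mono[OF assms(2)] by simp
qed

lemma eventually_at_right_prod_pos: "\<forall>\<^sub>F p in at_right (0::real) \<times>\<^sub>F G. 0 < fst p"
  using filterlim_fst[of "at_right (0::real)" G] eventually_at_right_less[of "0::real"]
  unfolding filterlim_iff by blast

lemma dirderiv_eq_0_if_quadratic:
  assumes "\<forall>\<^sub>F t in at_right 0. f (x + t *\<^sub>R w) = f x - c * t\<^sup>2 / 2"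
  shows "dirderiv f x w = 0"
proof -
  have "((\<lambda>t. - c * t / 2) \<longlongrightarrow> 0) (at_right (0::real))"
    by (auto intro!: tendsto_eq_intros)
  moreover have "\<forall>\<^sub>F t in at_right 0. - c * t / 2 = (f (x + t *\<^sub>R w) - f x) / t"
    using assms eventually_at_right_less[of "0::real"]
    by eventually_elim (simp add: power2_eq_square field_simps)
  ultimately have "((\<lambda>t. (f (x + t *\<^sub>R w) - f x) / t) \<longlongrightarrow> 0) (at_right 0)"
    by (rule Lim_transform_eventually)
  then show ?thesis
    unfolding dirderiv_def by (rule tendsto_Lim[OF trivial_limit_at_right_real])
qed

lemma second_quotient_eq_if_quadratic:
  assumes "\<forall>\<^sub>F t in at_right 0. f (x + t *\<^sub>R w) = f x - c * t\<^sup>2 / 2"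
  shows "\<forall>\<^sub>F t in at_right 0. (f (x + t *\<^sub>R w) - f x - t * dirderiv f x w) / (t\<^sup>2 / 2) = - c"
  using assms eventually_at_right_less[of "0::real"]
  by eventually_elim (simp add: dirderiv_eq_0_if_quadratic[OF assms])

lemma second_subderiv_eqI:
  fixes N :: "real ^ 'n \<Rightarrow> real"
  assumes quadratic: "\<forall>\<^sub>F t in at_right 0. f (x + t *\<^sub>R w) = f x - c * t\<^sup>2 / 2"
    and lower: "\<And>t v. 0 < t \<Longrightarrow> - (t\<^sup>2 / 2 * (N v)\<^sup>2) \<le> f (x + t *\<^sub>R v) - f x - t * dirderiv f x v"
    and "isCont N w" and "(N w)\<^sup>2 = c"
  shows "second_subderiv f x w = ereal (- c)"
proof (rule antisym)
  define g where "g = (\<lambda>(t, v). ereal ((f (x + t *\<^sub>R v) - f x - t * dirderiv f x v) / (t\<^sup>2 / 2)))"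
  have ev: "\<forall>\<^sub>F t in at_right 0. g (t, w) = ereal (- c)"
    using second_quotient_eq_if_quadratic[OF quadratic] by eventually_elim (simp add: g_def)
  show "second_subderiv f x w \<le> ereal (- c)"
    unfolding second_subderiv_def g_def[symmetric] by (rule Liminf_prod_nhds_le_const[OF _ ev]) simp
  have "\<forall>\<^sub>F p in at_right 0 \<times>\<^sub>F nhds w. ereal (- (N (snd p))\<^sup>2) \<le> g p"
    using eventually_at_right_prod_pos
  proof eventually_elim
    case (elim p)
    then show ?case
      using lower[of "fst p" "snd p"] by (auto simp: g_def case_prod_unfold field_simps)
  qed
  moreover have "((\<lambda>p. - (N (snd p))\<^sup>2) \<longlongrightarrow> - c) (at_right 0 \<times>\<^sub>F nhds w)"
    using isCont_tendsto_compose[OF \<open>isCont N w\<close> filterlim_snd] \<open>(N w)\<^sup>2 = c\<close>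
    by (auto intro!: tendsto_eq_intros)
  ultimately show "ereal (- c) \<le> second_subderiv f x w"
    unfolding second_subderiv_def g_def[symmetric]
    by (intro Liminf_ge_limit) (auto simp: prod_filter_eq_bot)
qed

lemma INF_parabolic_subderiv_eqI:
  fixes N :: "real ^ 'n \<Rightarrow> real"
  assumes quadratic: "\<forall>\<^sub>F t in at_right 0. f (x + t *\<^sub>R w) = f x - c * t\<^sup>2 / 2"
    and lower: "\<And>y. f x - (N y)\<^sup>2 / 2 \<le> f (x + y)"
    and N_scaleR: "\<And>a v. N (a *\<^sub>R v) = \<bar>a\<bar> * N v"
    and "isCont N w" and "(N w)\<^sup>2 = c"
  shows "(INF z. parabolic_subderiv f x w z) = ereal (- c)"
proof (rule antisym)
  define g where "g = (\<lambda>(t, z). ereal ((f (x + t *\<^sub>R w + ((1/2) * t\<^sup>2) *\<^sub>R z) - f x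
                                          - t * dirderiv f x w) / (t\<^sup>2 / 2)))"
  have ev: "\<forall>\<^sub>F t in at_right 0. g (t, 0) = ereal (- c)"
    using second_quotient_eq_if_quadratic[OF quadratic] by eventually_elim (simp add: g_def)
  have "parabolic_subderiv f x w 0 \<le> ereal (- c)"
    unfolding parabolic_subderiv_def g_def[symmetric] by (rule Liminf_prod_nhds_le_const[OF _ ev]) simp
  then show "(INF z. parabolic_subderiv f x w z) \<le> ereal (- c)"
    by (simp add: INF_lower2)
  have "ereal (- c) \<le> parabolic_subderiv f x w z" for z
  proof -
    \<comment> \<open>The parabolic curve is a ray through the moving direction \<open>w + (t/2) z'\<close>,
      which tends to \<open>w\<close>.\<close>
    define h where "h p = w + (fst p / 2) *\<^sub>R snd p" for p :: "real \<times> (real ^ 'n)"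
    have "\<forall>\<^sub>F p in at_right 0 \<times>\<^sub>F nhds z. ereal (- (N (h p))\<^sup>2) \<le> g p"
      using eventually_at_right_prod_pos
    proof eventually_elim
      case (elim p)
      obtain t z' where p: "p = (t, z')" by fastforce
      have "x + t *\<^sub>R w + ((1/2) * t\<^sup>2) *\<^sub>R z' = x + t *\<^sub>R h p"
        by (simp add: h_def p scaleR_add_right power2_eq_square add.assoc)
      moreover have "f x - t\<^sup>2 * (N (h p))\<^sup>2 / 2 \<le> f (x + t *\<^sub>R h p)"
        using lower[of "t *\<^sub>R h p"] by (simp add: N_scaleR power_mult_distrib)
      ultimately show ?case
        using elim by (simp add: g_def p dirderiv_eq_0_if_quadratic[OF quadratic] field_simps)
    qed
    moreover have "(h \<longlongrightarrow> w) (at_right 0 \<times>\<^sub>F nhds z)"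
    proof -
      have "(fst \<longlongrightarrow> 0) (at_right (0::real) \<times>\<^sub>F nhds z)"
        using filterlim_mono[OF filterlim_fst at_within_le_nhds order_refl] .
      then have "(h \<longlongrightarrow> w + (0 / 2) *\<^sub>R z) (at_right 0 \<times>\<^sub>F nhds z)"
        unfolding h_def by (intro tendsto_intros filterlim_snd) auto
      then show ?thesis
        by simp
    qed
    then have "((\<lambda>p. - (N (h p))\<^sup>2) \<longlongrightarrow> - c) (at_right 0 \<times>\<^sub>F nhds z)"
      using isCont_tendsto_compose[OF \<open>isCont N w\<close>] \<open>(N w)\<^sup>2 = c\<close>
      by (auto intro!: tendsto_eq_intros)
    ultimately show ?thesis
      unfolding parabolic_subderiv_def g_def[symmetric]
      by (intro Liminf_ge_limit) (auto simp: prod_filter_eq_bot)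
  qed
  then show "ereal (- c) \<le> (INF z. parabolic_subderiv f x w z)"
    by (rule INF_greatest)
qed

lemma l1norm_scaleR: "l1norm (a *\<^sub>R v) = \<bar>a\<bar> * l1norm v"
  unfolding l1norm_def by (simp add: abs_mult sum_distrib_left)

lemma l1norm_uminus: "l1norm (- v) = l1norm v"
  unfolding l1norm_def by simp

lemma l1norm_squared: "(l1norm v)\<^sup>2 = (\<Sum>i\<in>UNIV. \<Sum>j\<in>UNIV. \<bar>v $ i * v $ j\<bar>)"
  unfolding l1norm_def power2_eq_square sum_product by (simp add: abs_mult)

lemma isCont_l1norm: "isCont l1norm v"
  unfolding isCont_def l1norm_def by (intro tendsto_intros tendsto_ident_at)

definition abs_dirderiv :: "real \<Rightarrow> real \<Rightarrow> real" where
  "abs_dirderiv c b = (if c = 0 then \<bar>b\<bar> else sgn c * b)"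

lemma abs_quadratic_remainder_ge:
  assumes "0 < t"
  shows "- (t\<^sup>2 * \<bar>a\<bar>) \<le> \<bar>c + b * t + a * t\<^sup>2\<bar> - \<bar>c\<bar> - t * abs_dirderiv c b"
proof (cases "c = 0")
  case True
  have "\<bar>b * t\<bar> - \<bar>a * t\<^sup>2\<bar> \<le> \<bar>b * t + a * t\<^sup>2\<bar>"
    by linarith
  with True assms show ?thesis
    by (simp add: abs_dirderiv_def abs_mult algebra_simps)
next
  case False
  have sgn_le: "sgn c * y \<le> \<bar>y\<bar>" for y
    by (auto simp: sgn_if)
  have "sgn c * c = \<bar>c\<bar>"
    by (simp add: sgn_if)
  with sgn_le[of "c + b * t + a * t\<^sup>2"] sgn_le[of "- (a * t\<^sup>2)"] False show ?thesis
    by (simp add: abs_dirderiv_def abs_mult algebra_simps)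
qed

lemma tendsto_abs_quadratic_quotient:
  "((\<lambda>t. (\<bar>c + b * t + a * t\<^sup>2\<bar> - \<bar>c\<bar>) / t) \<longlongrightarrow> abs_dirderiv c b) (at_right 0)"
proof (cases "c = 0")
  case True
  have "((\<lambda>t. \<bar>b + a * t\<bar>) \<longlongrightarrow> \<bar>b + a * 0\<bar>) (at_right 0)"
    by (intro tendsto_intros)
  moreover have "\<forall>\<^sub>F t in at_right 0. \<bar>b + a * t\<bar> = (\<bar>c + b * t + a * t\<^sup>2\<bar> - \<bar>c\<bar>) / t"
    using eventually_at_right_less[of "0::real"]
  proof eventually_elim
    case (elim t)
    have "b * t + a * t\<^sup>2 = t * (b + a * t)"
      by (simp add: power2_eq_square algebra_simps)
    with elim True show ?case
      by (simp add: abs_mult)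
  qed
  ultimately show ?thesis
    using True by (simp add: abs_dirderiv_def Lim_transform_eventually)
next
  case False
  have "((\<lambda>t. sgn c * (c + b * t + a * t\<^sup>2)) \<longlongrightarrow> sgn c * (c + b * 0 + a * 0\<^sup>2)) (at_right 0)"
    by (intro tendsto_intros)
  moreover have "sgn c * c = \<bar>c\<bar>"
    by (simp add: sgn_if)
  ultimately have "\<forall>\<^sub>F t in at_right 0. 0 < sgn c * (c + b * t + a * t\<^sup>2)"
    using False by (intro order_tendstoD) auto
  then have "\<forall>\<^sub>F t in at_right 0. sgn c * (b + a * t) = (\<bar>c + b * t + a * t\<^sup>2\<bar> - \<bar>c\<bar>) / t"
    using eventually_at_right_less[of "0::real"]
  proof eventually_elim
    case (elim t)
    \<comment> \<open>Near \<open>t = 0\<close> the quadratic has the sign of \<open>c\<close>, so the absolute value is linear there.\<close>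
    then have "\<bar>c + b * t + a * t\<^sup>2\<bar> - \<bar>c\<bar> = t * (sgn c * (b + a * t))"
      using \<open>sgn c * c = \<bar>c\<bar>\<close> False
      by (auto simp: sgn_if power2_eq_square algebra_simps split: if_splits)
    with elim show ?case
      by simp
  qed
  moreover have "((\<lambda>t. sgn c * (b + a * t)) \<longlongrightarrow> sgn c * (b + a * 0)) (at_right 0)"
    by (intro tendsto_intros)
  ultimately show ?thesis
    using False by (simp add: abs_dirderiv_def Lim_transform_eventually)
qed

definition rpca_dirderiv :: "real ^ 'n \<Rightarrow> real ^ 'n \<Rightarrow> real ^ 'n \<Rightarrow> real" where
  "rpca_dirderiv s u d = (1/2) * (\<Sum>i\<in>UNIV. \<Sum>j\<in>UNIV.
     abs_dirderiv (u $ i * u $ j - s $ i * s $ j) (u $ i * d $ j + d $ i * u $ j))"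

lemma rpca_f_add_scaleR_diff:
  "rpca_f s (u + t *\<^sub>R d) - rpca_f s u = (1/2) * (\<Sum>i\<in>UNIV. \<Sum>j\<in>UNIV.
     \<bar>(u $ i * u $ j - s $ i * s $ j) + (u $ i * d $ j + d $ i * u $ j) * t + (d $ i * d $ j) * t\<^sup>2\<bar>
     - \<bar>u $ i * u $ j - s $ i * s $ j\<bar>)"
  unfolding rpca_f_def by (simp add: sum_subtractf algebra_simps power2_eq_square)

lemma dirderiv_rpca_f: "dirderiv (rpca_f s) u d = rpca_dirderiv s u d"
proof -
  have "((\<lambda>t. (rpca_f s (u + t *\<^sub>R d) - rpca_f s u) / t) \<longlongrightarrow> rpca_dirderiv s u d) (at_right 0)"
    unfolding rpca_f_add_scaleR_diff rpca_dirderiv_def times_divide_eq_right[symmetric] sum_divide_distrib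
    by (intro tendsto_intros tendsto_abs_quadratic_quotient)
  then show ?thesis
    unfolding dirderiv_def by (rule tendsto_Lim[OF trivial_limit_at_right_real])
qed

lemma rpca_f_second_order_ge:
  assumes "0 < t"
  shows "- (t\<^sup>2 / 2 * (l1norm d)\<^sup>2) \<le> rpca_f s (u + t *\<^sub>R d) - rpca_f s u - t * rpca_dirderiv s u d"
proof -
  have "- (t\<^sup>2 / 2 * (l1norm d)\<^sup>2) = (1/2) * (\<Sum>i\<in>UNIV. \<Sum>j\<in>UNIV. - (t\<^sup>2 * \<bar>d $ i * d $ j\<bar>))"
    by (simp add: l1norm_squared sum_negf sum_distrib_left)
  also have "\<dots> \<le> (1/2) * (\<Sum>i\<in>UNIV. \<Sum>j\<in>UNIV.
     \<bar>(u $ i * u $ j - s $ i * s $ j) + (u $ i * d $ j + d $ i * u $ j) * t + (d $ i * d $ j) * t\<^sup>2\<bar>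
     - \<bar>u $ i * u $ j - s $ i * s $ j\<bar>
     - t * abs_dirderiv (u $ i * u $ j - s $ i * s $ j) (u $ i * d $ j + d $ i * u $ j))"
    by (intro mult_left_mono sum_mono abs_quadratic_remainder_ge[OF assms]) simp
  also have "\<dots> = rpca_f s (u + t *\<^sub>R d) - rpca_f s u - t * rpca_dirderiv s u d"
    unfolding rpca_f_add_scaleR_diff rpca_dirderiv_def
    by (simp add: sum_subtractf right_diff_distrib flip: sum_distrib_left)
  finally show ?thesis .
qed

lemma Sign_mult_self: "z \<in> Sign m \<Longrightarrow> z * m = \<bar>m\<bar>"
  by (auto simp: Sign_def split: if_splits)

lemma Sign_abs_le_1: "z \<in> Sign m \<Longrightarrow> \<bar>z\<bar> \<le> 1"
  by (auto simp: Sign_def split: if_splits)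

lemma Sign_pos_eq: "0 < m \<Longrightarrow> z \<in> Sign m \<Longrightarrow> z = 1"
  by (auto simp: Sign_def)

lemma Sign_neg_eq: "m < 0 \<Longrightarrow> z \<in> Sign m \<Longrightarrow> z = -1"
  by (auto simp: Sign_def)

lemma Sign_mult_unit: "\<bar>c\<bar> = 1 \<Longrightarrow> z \<in> Sign m \<Longrightarrow> c * z \<in> Sign (c * m)"
  by (auto simp: Sign_def abs_if zero_less_mult_iff mult_less_0_iff split: if_splits)

lemma weighted_block_row_sums:
  fixes x :: "'a \<Rightarrow> real" and Y :: "'a \<Rightarrow> 'a \<Rightarrow> real"
  assumes "finite P" "R \<subseteq> P" "Q \<subseteq> P" and Y_sym: "\<And>i j. Y i j = Y j i"
    and Y_top: "\<And>i j. i \<in> R \<Longrightarrow> j \<in> P - Q \<Longrightarrow> Y i j = 1"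
    and Y_bot: "\<And>i j. i \<in> Q \<Longrightarrow> j \<in> P - R \<Longrightarrow> Y i j = - 1"
    and rows: "\<And>i. i \<in> P \<Longrightarrow> (\<Sum>j\<in>P. Y i j * x j) = - q"
  shows "sum x R * sum x (P - Q) + (\<Sum>i\<in>R. \<Sum>j\<in>Q. x i * Y i j * x j) = - q * sum x R"
    and "(\<Sum>i\<in>R. \<Sum>j\<in>Q. x i * Y i j * x j) - sum x Q * sum x (P - R) = - q * sum x Q"
proof -
  have row_R: "sum x (P - Q) + (\<Sum>j\<in>Q. Y i j * x j) = - q" if "i \<in> R" for i
    using rows[OF subsetD[OF assms(2) that]] assms(1,3) Y_top[OF that]
    by (simp add: sum.subset_diff[of Q P])
  have row_Q: "(\<Sum>j\<in>R. Y k j * x j) - sum x (P - R) = - q" if "k \<in> Q" for k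
    using rows[OF subsetD[OF assms(3) that]] assms(1,2) Y_bot[OF that]
    by (simp add: sum.subset_diff[of R P] sum_negf)
  have "(\<Sum>i\<in>R. x i * (c + (\<Sum>j\<in>Q. Y i j * x j)))
      = sum x R * c + (\<Sum>i\<in>R. \<Sum>j\<in>Q. x i * Y i j * x j)" for c
    by (simp add: distrib_left sum.distrib sum_distrib_left sum_distrib_right mult.assoc)
  moreover have "(\<Sum>i\<in>R. x i * (sum x (P - Q) + (\<Sum>j\<in>Q. Y i j * x j))) = - q * sum x R"
    using row_R by (simp add: sum_distrib_left mult.commute)
  ultimately show "sum x R * sum x (P - Q) + (\<Sum>i\<in>R. \<Sum>j\<in>Q. x i * Y i j * x j) = - q * sum x R"
    by metis
  have "(\<Sum>k\<in>Q. x k * ((\<Sum>j\<in>R. Y k j * x j) - c))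
      = (\<Sum>k\<in>Q. \<Sum>j\<in>R. x k * Y k j * x j) - sum x Q * c" for c
    by (simp add: right_diff_distrib sum_subtractf sum_distrib_left sum_distrib_right mult.assoc)
  moreover have "(\<Sum>k\<in>Q. \<Sum>j\<in>R. x k * Y k j * x j) = (\<Sum>i\<in>R. \<Sum>j\<in>Q. x i * Y i j * x j)"
    by (subst sum.swap) (simp add: Y_sym mult_ac)
  moreover have "(\<Sum>k\<in>Q. x k * ((\<Sum>j\<in>R. Y k j * x j) - sum x (P - R))) = - q * sum x Q"
    using row_Q by (simp add: sum_distrib_left mult.commute)
  ultimately show "(\<Sum>i\<in>R. \<Sum>j\<in>Q. x i * Y i j * x j) - sum x Q * sum x (P - R) = - q * sum x Q"
    by metis
qed

lemma no_signed_blocks_with_nonpos_row_sums: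
  fixes x :: "'a \<Rightarrow> real" and Y :: "'a \<Rightarrow> 'a \<Rightarrow> real"
  assumes "finite P" "R \<subseteq> P" "Q \<subseteq> P" "R \<inter> Q = {}" "R \<noteq> {}"
    and x_pos: "\<And>j. j \<in> P \<Longrightarrow> 0 < x j"
    and Y_sym: "\<And>i j. Y i j = Y j i" and Y_ge: "\<And>i j. - 1 \<le> Y i j"
    and Y_top: "\<And>i j. i \<in> R \<Longrightarrow> j \<in> P - Q \<Longrightarrow> Y i j = 1"
    and Y_bot: "\<And>i j. i \<in> Q \<Longrightarrow> j \<in> P - R \<Longrightarrow> Y i j = - 1"
    and "0 \<le> q" and rows: "\<And>i. i \<in> P \<Longrightarrow> (\<Sum>j\<in>P. Y i j * x j) = - q"
  shows False
proof -
  \<comment> \<open>The weighted row sums over \<open>R\<close> make the cross term \<open>W\<close> negative,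
    those over \<open>Q\<close> make it nonnegative.\<close>
  define sR where "sR = sum x R"
  define sQ where "sQ = sum x Q"
  define sT where "sT = sum x (P - Q)"
  define sU where "sU = sum x (P - R)"
  define W where "W = (\<Sum>i\<in>R. \<Sum>j\<in>Q. x i * Y i j * x j)"
  note eqs = weighted_block_row_sums[OF assms(1-3) Y_sym Y_top Y_bot rows,
      folded sR_def sQ_def sT_def sU_def W_def]
  have fin: "finite R" "finite Q"
    using assms(1-3) finite_subset by auto
  have "(\<Sum>i\<in>R. \<Sum>j\<in>Q. - (x i * x j)) \<le> W"
    unfolding W_def
  proof (intro sum_mono)
    fix i j assume "i \<in> R" "j \<in> Q"
    then have "0 < x i * x j"
      using assms(2,3) x_pos by (blast intro: mult_pos_pos)
    then show "- (x i * x j) \<le> x i * Y i j * x j"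
      using Y_ge[of i j] mult_right_mono[of "- 1" "Y i j" "x i * x j"] by (simp add: mult_ac)
  qed
  then have "- (sR * sQ) \<le> W"
    by (simp add: sR_def sQ_def sum_negf sum_product)
  have "sR \<le> sT" "sQ \<le> sU" "0 \<le> sQ"
    using assms(1-4) x_pos fin less_imp_le unfolding sR_def sT_def sQ_def sU_def
    by (blast intro: sum_mono2 sum_nonneg)+
  moreover have "0 < sR"
    using assms(2,5) x_pos fin unfolding sR_def by (intro sum_pos) auto
  ultimately have "0 < sR * sT" "0 \<le> q * sR"
    using \<open>0 \<le> q\<close> by simp_all
  then have "W < 0"
    using eqs(1) by (simp add: algebra_simps)
  have "sR * (q + sT) \<le> sR * sQ"
    using eqs(1) \<open>- (sR * sQ) \<le> W\<close> by (simp add: algebra_simps)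
  then have "q + sT \<le> sQ"
    using \<open>0 < sR\<close> by simp
  have "sQ * (sQ - q) \<le> W"
    using eqs(2) \<open>sQ \<le> sU\<close> \<open>0 \<le> sQ\<close> mult_left_mono[of sQ sU sQ] by (simp add: algebra_simps)
  moreover have "0 \<le> sQ * (sQ - q)"
    using \<open>q + sT \<le> sQ\<close> \<open>sR \<le> sT\<close> \<open>0 < sR\<close> \<open>0 \<le> sQ\<close> by simp
  ultimately show False
    using \<open>W < 0\<close> by simp
qed

lemma le_if_Sign_rows_nonpos:
  fixes x a :: "'a \<Rightarrow> real" and Y :: "'a \<Rightarrow> 'a \<Rightarrow> real"
  assumes "finite P" and pos: "\<And>j. j \<in> P \<Longrightarrow> 0 < x j \<and> 0 < a j"
    and Y_sym: "\<And>i j. Y i j = Y j i" and Y_ge: "\<And>i j. - 1 \<le> Y i j"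
    and Y_Sign: "\<And>i j. i \<in> P \<Longrightarrow> j \<in> P \<Longrightarrow> Y i j \<in> Sign (x i * x j - a i * a j)"
    and "0 \<le> q" and rows: "\<And>i. i \<in> P \<Longrightarrow> (\<Sum>j\<in>P. Y i j * x j) = - q"
    and "i \<in> P"
  shows "x i \<le> a i"
proof (rule ccontr)
  \<comment> \<open>Rank \<open>P\<close> by the ratio \<open>r = x / a\<close>: the indices of maximal ratio \<open>A > 1\<close> and those
    of ratio at most \<open>1 / A\<close> carry the blocks of signs excluded above.\<close>
  assume "\<not> x i \<le> a i"
  define r where "r j = x j / a j" for j
  define A where "A = Max (r ` P)"
  define R where "R = {j \<in> P. r j = A}"
  define Q where "Q = {j \<in> P. r j \<le> 1 / A}"
  have r_pos: "0 < r j" if "j \<in> P" for j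
    using pos[OF that] by (simp add: r_def)
  have r_le: "r j \<le> A" if "j \<in> P" for j
    unfolding A_def using that \<open>finite P\<close> by simp
  have "1 < r i"
    using pos[OF \<open>i \<in> P\<close>] \<open>\<not> x i \<le> a i\<close> by (simp add: r_def)
  then have "1 < A"
    using r_le[OF \<open>i \<in> P\<close>] by simp
  then have "1 / A < A"
    by (smt (verit) divide_less_eq_1_pos)
  have prod: "x j * x k - a j * a k = (r j * r k - 1) * (a j * a k)" if "j \<in> P" "k \<in> P" for j k
    using pos[OF that(1)] pos[OF that(2)] by (simp add: r_def field_simps)
  show False
  proof (rule no_signed_blocks_with_nonpos_row_sums[of P R Q x Y q])
    show "R \<inter> Q = {}"
      using \<open>1 / A < A\<close> by (auto simp: R_def Q_def)
    have "A \<in> r ` P"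
      unfolding A_def using \<open>i \<in> P\<close> \<open>finite P\<close> by (intro Max_in) auto
    then show "R \<noteq> {}"
      by (auto simp: R_def)
    show "Y j k = 1" if "j \<in> R" "k \<in> P - Q" for j k
    proof (rule Sign_pos_eq[OF _ Y_Sign])
      have "1 / A < r k"
        using that by (auto simp: Q_def)
      then have "1 < r j * r k"
        using that \<open>1 < A\<close> pos_divide_less_eq[of A 1 "r k"] by (simp add: R_def mult.commute)
      then show "0 < x j * x k - a j * a k"
        using that prod[of j k] pos[of j] pos[of k] by (simp add: R_def)
    qed (use that in \<open>auto simp: R_def\<close>)
    show "Y j k = - 1" if "j \<in> Q" "k \<in> P - R" for j k
    proof (rule Sign_neg_eq[OF _ Y_Sign])
      have "r j * r k \<le> (1 / A) * r k"
        using that r_pos[of k] by (intro mult_right_mono) (auto simp: Q_def)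
      also have "\<dots> < 1"
        using that r_le[of k] \<open>1 < A\<close> by (auto simp: R_def)
      finally show "x j * x k - a j * a k < 0"
        using that prod[of j k] pos[of j] pos[of k] by (simp add: Q_def mult_neg_pos)
    qed (use that in \<open>auto simp: Q_def\<close>)
  qed (use assms in \<open>auto simp: R_def Q_def\<close>)
qed

locale stationary_certificate =
  fixes s u :: "real ^ 'n" and Z :: "real ^ 'n ^ 'n"
  assumes Z_sym: "Z $ i $ j = Z $ j $ i"
    and Z_Sign: "Z $ i $ j \<in> Sign (u $ i * u $ j - s $ i * s $ j)"
    and Z_row: "(\<Sum>j\<in>UNIV. Z $ i $ j * u $ j) = 0"

lemma stationaryE:
  fixes s u :: "real ^ 'n"
  assumes "stationary s u"
  obtains Z where "stationary_certificate s u Z"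
proof -
  from assms obtain Z :: "real ^ 'n ^ 'n" where Z: "Z *v u = 0" "transpose Z = Z"
    "\<forall>i j. Z $ i $ j \<in> Sign (u $ i * u $ j - s $ i * s $ j)"
    unfolding stationary_def rpca_subdiff_def by auto
  have "Z $ i $ j = Z $ j $ i" for i j
    using arg_cong[OF Z(2), of "\<lambda>A. A $ i $ j"] by (simp add: transpose_def)
  moreover have "(\<Sum>j\<in>UNIV. Z $ i $ j * u $ j) = 0" for i
    using arg_cong[OF Z(1), of "\<lambda>v. v $ i"] by (simp add: matrix_vector_mult_def)
  ultimately show thesis
    using Z(3) by (intro that) (unfold_locales, auto)
qed

context stationary_certificate
begin

lemma Z_abs_le_1: "\<bar>Z $ i $ j\<bar> \<le> 1"
  using Z_Sign by (rule Sign_abs_le_1)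

lemma Z_mult_bounds: "- \<bar>m\<bar> \<le> Z $ i $ j * m" "Z $ i $ j * m \<le> \<bar>m\<bar>"
proof -
  have "\<bar>Z $ i $ j * m\<bar> \<le> \<bar>m\<bar>"
    using mult_right_mono[OF Z_abs_le_1 abs_ge_zero, of i j m] by (simp add: abs_mult)
  then show "- \<bar>m\<bar> \<le> Z $ i $ j * m" "Z $ i $ j * m \<le> \<bar>m\<bar>"
    by linarith+
qed

lemma eq_0_if_target_eq_0:
  assumes "s $ i = 0"
  shows "u $ i = 0"
proof -
  have "\<bar>u $ i * u $ i\<bar> \<le> (\<Sum>j\<in>UNIV. \<bar>u $ i * u $ j\<bar>)"
    by (rule member_le_sum) auto
  also have "\<dots> = (\<Sum>j\<in>UNIV. Z $ i $ j * (u $ i * u $ j))"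
    using Sign_mult_self[OF Z_Sign[of i]] assms by (intro sum.cong) auto
  also have "\<dots> = u $ i * (\<Sum>j\<in>UNIV. Z $ i $ j * u $ j)"
    by (simp add: sum_distrib_left mult_ac)
  finally show ?thesis
    by (auto simp: Z_row mult_le_0_iff)
qed

lemma rpca_f_ge: "rpca_f s u - (l1norm y)\<^sup>2 / 2 \<le> rpca_f s (u + y)"
proof -
  \<comment> \<open>Pair \<open>(u + y)(u + y)\<^sup>T - s s\<^sup>T\<close> with \<open>Z\<close>: the two cross terms vanish because
    \<open>Z u = 0\<close> and \<open>Z\<close> is symmetric.\<close>
  have cross: "(\<Sum>i\<in>UNIV. \<Sum>j\<in>UNIV. Z $ i $ j * (y $ i * u $ j)) = 0"
  proof -
    have "(\<Sum>i\<in>UNIV. \<Sum>j\<in>UNIV. Z $ i $ j * (y $ i * u $ j))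
        = (\<Sum>i\<in>UNIV. y $ i * (\<Sum>j\<in>UNIV. Z $ i $ j * u $ j))"
      by (simp add: sum_distrib_left mult_ac)
    then show ?thesis
      by (simp add: Z_row)
  qed
  have cross': "(\<Sum>i\<in>UNIV. \<Sum>j\<in>UNIV. Z $ i $ j * (u $ i * y $ j)) = 0"
    using cross by (subst sum.swap) (simp add: Z_sym mult_ac)
  have quad: "- (l1norm y)\<^sup>2 \<le> (\<Sum>i\<in>UNIV. \<Sum>j\<in>UNIV. Z $ i $ j * (y $ i * y $ j))"
    unfolding l1norm_squared sum_negf[symmetric] by (intro sum_mono Z_mult_bounds)
  have "2 * rpca_f s u - (l1norm y)\<^sup>2
      \<le> (\<Sum>i\<in>UNIV. \<Sum>j\<in>UNIV. Z $ i $ j * ((u + y) $ i * (u + y) $ j - s $ i * s $ j))"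
    using cross cross' quad Sign_mult_self[OF Z_Sign]
    by (simp add: rpca_f_def algebra_simps sum.distrib)
  also have "\<dots> \<le> 2 * rpca_f s (u + y)"
    unfolding rpca_f_def by (simp add: sum_mono Z_mult_bounds)
  finally show ?thesis
    by simp
qed

lemma uminus: "stationary_certificate s (- u) Z"
proof unfold_locales
  fix i j
  show "Z $ i $ j = Z $ j $ i"
    by (rule Z_sym)
  show "Z $ i $ j \<in> Sign ((- u) $ i * (- u) $ j - s $ i * s $ j)"
    using Z_Sign by simp
  show "(\<Sum>j\<in>UNIV. Z $ i $ j * (- u) $ j) = 0"
    using Z_row[of i] by (simp add: sum_negf)
qed

lemma flip_signs:
  assumes "\<And>i. \<bar>\<sigma> i\<bar> = 1"
  shows "stationary_certificate (\<chi> i. \<sigma> i * s $ i) (\<chi> i. \<sigma> i * u $ i) (\<chi> i j. \<sigma> i * \<sigma> j * Z $ i $ j)"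
proof unfold_locales
  fix i j
  have sq: "\<sigma> j * \<sigma> j = 1" for j
    using abs_mult_self_eq[of "\<sigma> j"] assms[of j] by simp
  show "(\<chi> i j. \<sigma> i * \<sigma> j * Z $ i $ j) $ i $ j = (\<chi> i j. \<sigma> i * \<sigma> j * Z $ i $ j) $ j $ i"
    by (simp add: Z_sym mult.commute)
  have "\<sigma> i * u $ i * (\<sigma> j * u $ j) - \<sigma> i * s $ i * (\<sigma> j * s $ j)
      = \<sigma> i * \<sigma> j * (u $ i * u $ j - s $ i * s $ j)"
    by (simp add: algebra_simps)
  then show "(\<chi> i j. \<sigma> i * \<sigma> j * Z $ i $ j) $ i $ j \<in> Sign ((\<chi> i. \<sigma> i * u $ i) $ i * (\<chi> i. \<sigma> i * u $ i) $ j
      - (\<chi> i. \<sigma> i * s $ i) $ i * (\<chi> i. \<sigma> i * s $ i) $ j)"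
    using Sign_mult_unit[OF _ Z_Sign, of "\<sigma> i * \<sigma> j" i j] assms by (simp add: abs_mult)
  have "\<sigma> i * \<sigma> j * Z $ i $ j * (\<sigma> j * u $ j) = \<sigma> i * (\<sigma> j * \<sigma> j) * (Z $ i $ j * u $ j)" for j
    by (simp only: mult_ac)
  then have "(\<Sum>j\<in>UNIV. \<sigma> i * \<sigma> j * Z $ i $ j * (\<sigma> j * u $ j)) = \<sigma> i * (\<Sum>j\<in>UNIV. Z $ i $ j * u $ j)"
    by (simp only: sq mult_1_right sum_distrib_left)
  then show "(\<Sum>j\<in>UNIV. (\<chi> i j. \<sigma> i * \<sigma> j * Z $ i $ j) $ i $ j * (\<chi> i. \<sigma> i * u $ i) $ j) = 0"
    by (simp add: Z_row)
qed

end

locale nonneg_certificate = stationary_certificate +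
  assumes s_nonneg: "0 \<le> s $ i"
begin

lemma target_pos: "u $ i \<noteq> 0 \<Longrightarrow> 0 < s $ i"
  using eq_0_if_target_eq_0 s_nonneg[of i] by force

lemma uminus_nonneg: "nonneg_certificate s (- u) Z"
  using uminus s_nonneg by (simp add: nonneg_certificate_def nonneg_certificate_axioms_def)

lemma Z_eq_minus_1:
  assumes "0 \<le> u $ i" "0 < s $ i" "u $ j < 0"
  shows "Z $ i $ j = - 1"
proof (rule Sign_neg_eq[OF _ Z_Sign])
  have "u $ i * u $ j \<le> 0"
    using assms by (simp add: mult_nonneg_nonpos)
  moreover have "0 < s $ i * s $ j"
    using assms target_pos[of j] by simp
  ultimately show "u $ i * u $ j - s $ i * s $ j < 0"
    by linarith
qed

lemma sum_nonneg_if_pos: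
  assumes "0 < u $ i"
  shows "0 \<le> (\<Sum>j\<in>UNIV. u $ j)"
proof -
  have "- u $ j \<le> Z $ i $ j * u $ j" for j
  proof (cases "u $ j < 0")
    case True
    then show ?thesis
      using Z_eq_minus_1[of i j] assms target_pos[of i] by simp
  next
    case False
    then show ?thesis
      using Z_mult_bounds(1)[of "u $ j" i j] by simp
  qed
  then have "(\<Sum>j\<in>UNIV. - u $ j) \<le> 0"
    using sum_mono[of UNIV "\<lambda>j. - u $ j" "\<lambda>j. Z $ i $ j * u $ j"] Z_row[of i] by simp
  then show ?thesis
    by (simp add: sum_negf)
qed

lemma row_sum_over_pos:
  assumes "0 < u $ i"
  shows "(\<Sum>j\<in>{j. 0 < u $ j}. Z $ i $ j * u $ j) = (\<Sum>j\<in>{j. u $ j \<le> 0}. u $ j)"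
proof -
  have "(\<Sum>j\<in>{j. u $ j \<le> 0}. Z $ i $ j * u $ j) = (\<Sum>j\<in>{j. u $ j \<le> 0}. - u $ j)"
    using Z_eq_minus_1[of i] assms target_pos[of i] by (intro sum.cong) (auto simp: le_less)
  moreover have "(\<Sum>j\<in>{j. 0 < u $ j}. Z $ i $ j * u $ j) + (\<Sum>j\<in>{j. u $ j \<le> 0}. Z $ i $ j * u $ j) = 0"
    using Z_row[of i] sum.union_disjoint[of "{j. 0 < u $ j}" "{j. u $ j \<le> 0}" "\<lambda>j. Z $ i $ j * u $ j"]
    by (simp add: Un_def not_less[symmetric] disjoint_iff)
  ultimately show ?thesis
    by (simp add: sum_negf)
qed

lemma le_target_if_pos:
  assumes "0 < u $ i"
  shows "u $ i \<le> s $ i"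
proof (rule le_if_Sign_rows_nonpos[where P = "{j. 0 < u $ j}" and x = "\<lambda>j. u $ j" and a = "\<lambda>j. s $ j"
      and Y = "\<lambda>j k. Z $ j $ k" and q = "- (\<Sum>k\<in>{k. u $ k \<le> 0}. u $ k)"])
  show "0 < u $ j \<and> 0 < s $ j" if "j \<in> {j. 0 < u $ j}" for j
    using that target_pos[of j] by simp
  show "- 1 \<le> Z $ j $ k" for j k
    using Z_abs_le_1[of j k] by simp
  show "0 \<le> - (\<Sum>k\<in>{k. u $ k \<le> 0}. u $ k)"
    using sum_nonpos[of "{k. u $ k \<le> 0}" "\<lambda>k. u $ k"] by simp
  show "(\<Sum>k\<in>{k. 0 < u $ k}. Z $ j $ k * u $ k) = - (- (\<Sum>k\<in>{k. u $ k \<le> 0}. u $ k))"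
    if "j \<in> {j. 0 < u $ j}" for j
    using row_sum_over_pos[of j] that by simp
qed (use assms Z_sym Z_Sign in auto)

lemma sum_eq_0_if_slack:
  assumes "0 \<le> u $ i" "u $ i < s $ i"
  shows "(\<Sum>j\<in>UNIV. u $ j) = 0"
proof -
  have "Z $ i $ j * u $ j = - u $ j" for j
  proof (cases "0 < u $ j")
    case True
    have "u $ i * u $ j < s $ i * u $ j"
      using assms True by simp
    also have "\<dots> \<le> s $ i * s $ j"
      using le_target_if_pos[OF True] assms by (intro mult_left_mono) auto
    finally show ?thesis
      using Sign_neg_eq[OF _ Z_Sign, of i j] by simp
  next
    case False
    then show ?thesis
      using Z_eq_minus_1[of i j] assms by (cases "u $ j = 0") auto
  qed
  then show ?thesis
    using Z_row[of i] by (simp add: sum_negf)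
qed

lemma abs_le_target: "\<bar>u $ i\<bar> \<le> s $ i"
proof -
  interpret neg: nonneg_certificate s "- u" Z
    by (rule uminus_nonneg)
  show ?thesis
    using le_target_if_pos[of i] neg.le_target_if_pos[of i] s_nonneg[of i]
    by (cases "0 < u $ i") (auto simp: abs_if)
qed

lemma sum_eq_0:
  assumes "u \<noteq> s" "u \<noteq> - s"
  shows "(\<Sum>j\<in>UNIV. u $ j) = 0"
proof -
  interpret neg: nonneg_certificate s "- u" Z
    by (rule uminus_nonneg)
  show ?thesis
  proof (cases "\<exists>i. \<bar>u $ i\<bar> < s $ i")
    case True
    then obtain i where "\<bar>u $ i\<bar> < s $ i"
      by blast
    then show ?thesis
      using sum_eq_0_if_slack[of i] neg.sum_eq_0_if_slack[of i]
      by (cases "0 \<le> u $ i") (simp_all add: sum_negf)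
  next
    case False
    \<comment> \<open>Then \<open>u = \<plusminus>s\<close> coordinatewise, and with both signs present each of \<open>u\<close> and \<open>-u\<close>
      has a positive entry.\<close>
    then have tight: "\<bar>u $ j\<bar> = s $ j" for j
      using abs_le_target[of j] by (metis antisym not_less)
    obtain j where "u $ j \<noteq> s $ j"
      using assms(1) by (auto simp: vec_eq_iff)
    then have "0 < (- u) $ j"
      using tight[of j] by (auto simp: abs_if split: if_splits)
    obtain k where "u $ k \<noteq> - s $ k"
      using assms(2) by (auto simp: vec_eq_iff)
    then have "0 < u $ k"
      using tight[of k] by (auto simp: abs_if split: if_splits)
    show ?thesis
      using sum_nonneg_if_pos[OF \<open>0 < u $ k\<close>] neg.sum_nonneg_if_pos[OF \<open>0 < (- u) $ j\<close>]
      by (simp add: sum_negf)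
  qed
qed

end

context stationary_certificate
begin

lemma spurious_bounds:
  assumes "u \<noteq> s" "u \<noteq> - s"
  shows "\<bar>u $ i\<bar> \<le> \<bar>s $ i\<bar>" and "(\<Sum>i\<in>UNIV. sgn (s $ i) * u $ i) = 0"
proof -
  \<comment> \<open>Flipping the signs of the coordinates where \<open>s\<close> is negative reduces to a nonnegative target.\<close>
  define \<sigma> :: "'n \<Rightarrow> real" where "\<sigma> i = (if s $ i < 0 then - 1 else 1)" for i
  have \<sigma>_abs: "\<bar>\<sigma> i\<bar> = 1" for i
    by (simp add: \<sigma>_def)
  interpret flipped: nonneg_certificate "\<chi> i. \<sigma> i * s $ i" "\<chi> i. \<sigma> i * u $ i" "\<chi> i j. \<sigma> i * \<sigma> j * Z $ i $ j"
    using flip_signs[OF \<sigma>_abs] by (simp add: nonneg_certificate_def nonneg_certificate_axioms_def \<sigma>_def)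
  have flip_inj: "x = y" if "(\<chi> i. \<sigma> i * x $ i) = (\<chi> i. \<sigma> i * y $ i)" for x y :: "real ^ 'n"
  proof -
    have "\<sigma> i * x $ i = \<sigma> i * y $ i" for i
      using arg_cong[OF that, of "\<lambda>v. v $ i"] by simp
    moreover have "\<sigma> i \<noteq> 0" for i
      by (simp add: \<sigma>_def)
    ultimately show ?thesis
      by (simp add: vec_eq_iff)
  qed
  have "- (\<chi> i. \<sigma> i * s $ i) = (\<chi> i. \<sigma> i * (- s) $ i)"
    by (simp add: vec_eq_iff)
  then have "(\<chi> i. \<sigma> i * u $ i) \<noteq> (\<chi> i. \<sigma> i * s $ i)" "(\<chi> i. \<sigma> i * u $ i) \<noteq> - (\<chi> i. \<sigma> i * s $ i)"
    using assms flip_inj by metis+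
  then have "(\<Sum>i\<in>UNIV. \<sigma> i * u $ i) = 0"
    using flipped.sum_eq_0 by simp
  moreover have "\<sigma> i * u $ i = sgn (s $ i) * u $ i" for i
    using eq_0_if_target_eq_0[of i] by (auto simp: \<sigma>_def sgn_if)
  ultimately show "(\<Sum>i\<in>UNIV. sgn (s $ i) * u $ i) = 0"
    by simp
  have "\<sigma> i * s $ i = \<bar>s $ i\<bar>"
    by (simp add: \<sigma>_def)
  then show "\<bar>u $ i\<bar> \<le> \<bar>s $ i\<bar>"
    using flipped.abs_le_target[of i] \<sigma>_abs[of i] by (simp add: abs_mult)
qed

end

lemma spurious_stationary_bounds:
  assumes "spurious_stationary s u"
  shows "\<bar>u $ i\<bar> \<le> \<bar>s $ i\<bar>" and "(\<Sum>i\<in>UNIV. sgn (s $ i) * u $ i) = 0"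
proof -
  obtain Z where "stationary_certificate s u Z"
    using assms stationaryE unfolding spurious_stationary_def by blast
  then show "\<bar>u $ i\<bar> \<le> \<bar>s $ i\<bar>" and "(\<Sum>i\<in>UNIV. sgn (s $ i) * u $ i) = 0"
    using assms stationary_certificate.spurious_bounds unfolding spurious_stationary_def by auto
qed

lemma stationary_rpca_f_ge:
  assumes "stationary s u"
  shows "rpca_f s u - (l1norm y)\<^sup>2 / 2 \<le> rpca_f s (u + y)"
proof -
  obtain Z where "stationary_certificate s u Z"
    using assms by (rule stationaryE)
  then show ?thesis
    by (rule stationary_certificate.rpca_f_ge)
qed

lemma abs_diff_eq_of_abs_le:
  fixes p q :: real
  assumes "\<bar>q\<bar> \<le> \<bar>p\<bar>"
  shows "\<bar>q - p\<bar> = \<bar>p\<bar> - sgn p * q"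
  using assms by (auto simp: sgn_if abs_if)

lemma rpca_f_segment:
  assumes bound: "\<And>i. \<bar>u $ i\<bar> \<le> \<bar>s $ i\<bar>" and balanced: "(\<Sum>i\<in>UNIV. sgn (s $ i) * u $ i) = 0"
    and "0 \<le> t" "t \<le> 1"
  shows "rpca_f s (u + t *\<^sub>R (s - u)) = (l1norm s)\<^sup>2 / 2 * (1 - t\<^sup>2)"
proof -
  define v where "v = u + t *\<^sub>R (s - u)"
  have v_eq: "v $ i = (1 - t) * u $ i + t * s $ i" for i
    by (simp add: v_def algebra_simps)
  have v_le: "\<bar>v $ i\<bar> \<le> \<bar>s $ i\<bar>" for i
  proof -
    have "\<bar>v $ i\<bar> \<le> (1 - t) * \<bar>u $ i\<bar> + t * \<bar>s $ i\<bar>"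
      using abs_triangle_ineq[of "(1 - t) * u $ i" "t * s $ i"] assms(3,4) by (simp add: v_eq abs_mult)
    also have "\<dots> \<le> (1 - t) * \<bar>s $ i\<bar> + t * \<bar>s $ i\<bar>"
      using bound[of i] assms(4) by (intro add_right_mono mult_left_mono) auto
    finally show ?thesis
      by (simp add: algebra_simps)
  qed
  have "sgn (s $ i) * v $ i = (1 - t) * (sgn (s $ i) * u $ i) + t * \<bar>s $ i\<bar>" for i
    by (simp add: v_eq abs_sgn algebra_simps)
  then have "(\<Sum>i\<in>UNIV. sgn (s $ i) * v $ i) = (1 - t) * (\<Sum>i\<in>UNIV. sgn (s $ i) * u $ i) + t * l1norm s"
    by (simp add: l1norm_def sum.distrib sum_distrib_left)
  then have sum_v: "(\<Sum>i\<in>UNIV. sgn (s $ i) * v $ i) = t * l1norm s"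
    using balanced by simp
  have "rpca_f s v = (1/2) * (\<Sum>i\<in>UNIV. \<Sum>j\<in>UNIV. \<bar>s $ i * s $ j\<bar> - sgn (s $ i) * v $ i * (sgn (s $ j) * v $ j))"
    unfolding rpca_f_def
    using abs_diff_eq_of_abs_le[of "v $ _ * v $ _" "s $ _ * s $ _"] v_le
    by (simp add: abs_mult mult_mono sgn_mult mult_ac)
  also have "\<dots> = (1/2) * ((l1norm s)\<^sup>2 - (\<Sum>i\<in>UNIV. sgn (s $ i) * v $ i)\<^sup>2)"
    unfolding l1norm_squared power2_eq_square[of "\<Sum>i\<in>UNIV. sgn (s $ i) * v $ i"] sum_product
    by (simp add: sum_subtractf)
  also have "\<dots> = (l1norm s)\<^sup>2 / 2 * (1 - t\<^sup>2)"
    by (simp add: sum_v power_mult_distrib right_diff_distrib)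
  finally show ?thesis
    by (simp only: v_def)
qed

lemma l1norm_diff_eq:
  assumes "\<And>i. \<bar>u $ i\<bar> \<le> \<bar>s $ i\<bar>" and "(\<Sum>i\<in>UNIV. sgn (s $ i) * u $ i) = 0"
  shows "l1norm (s - u) = l1norm s"
proof -
  have "\<bar>s $ i - u $ i\<bar> = \<bar>s $ i\<bar> - sgn (s $ i) * u $ i" for i
    using abs_diff_eq_of_abs_le[OF assms(1)[of i]] by (simp add: abs_minus_commute)
  then have "l1norm (s - u) = (\<Sum>i\<in>UNIV. \<bar>s $ i\<bar> - sgn (s $ i) * u $ i)"
    by (simp add: l1norm_def)
  then show ?thesis
    using assms(2) by (simp add: sum_subtractf l1norm_def)
qed

lemma l1norm_pos:
  assumes "v \<noteq> 0"
  shows "0 < l1norm v"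
proof -
  obtain i where "v $ i \<noteq> 0"
    using assms by (auto simp: vec_eq_iff)
  then have "0 < \<bar>v $ i\<bar>"
    by simp
  also have "\<dots> \<le> l1norm v"
    unfolding l1norm_def by (rule member_le_sum) auto
  finally show ?thesis .
qed

lemma rpca_f_uminus: "rpca_f (- s) = rpca_f s"
  unfolding rpca_f_def by simp

lemma spurious_stationary_uminus: "spurious_stationary (- s) u \<longleftrightarrow> spurious_stationary s u"
  unfolding spurious_stationary_def stationary_def rpca_subdiff_def by auto

lemma spurious_stationary_quadratic_along:
  assumes "spurious_stationary s u" and "w = s - u \<or> w = - s - u"
  shows "\<forall>\<^sub>F t in at_right 0. rpca_f s (u + t *\<^sub>R w) = rpca_f s u - (l1norm s)\<^sup>2 * t\<^sup>2 / 2"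
    and "l1norm w = l1norm s"
proof -
  obtain s' where s': "s' = s \<or> s' = - s" and w: "w = s' - u"
    using assms(2) by blast
  then have f_eq: "rpca_f s' = rpca_f s" and S_eq: "l1norm s' = l1norm s"
    and bounds: "\<And>i. \<bar>u $ i\<bar> \<le> \<bar>s' $ i\<bar>" "(\<Sum>i\<in>UNIV. sgn (s' $ i) * u $ i) = 0"
    using assms(1) spurious_stationary_bounds[of s' u]
    by (auto simp: rpca_f_uminus l1norm_uminus spurious_stationary_uminus)
  show "\<forall>\<^sub>F t in at_right 0. rpca_f s (u + t *\<^sub>R w) = rpca_f s u - (l1norm s)\<^sup>2 * t\<^sup>2 / 2"
  proof (rule eventually_at_rightI[of 0 1])
    fix t :: real
    assume "t \<in> {0<..<1}"
    then show "rpca_f s (u + t *\<^sub>R w) = rpca_f s u - (l1norm s)\<^sup>2 * t\<^sup>2 / 2"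
      using rpca_f_segment[OF bounds, of t] rpca_f_segment[OF bounds, of 0]
      by (simp add: w f_eq S_eq algebra_simps)
  qed simp
  show "l1norm w = l1norm s"
    using l1norm_diff_eq[OF bounds] by (simp add: w S_eq)
qed

theorem corollary1:
  fixes ustar u w :: "real ^ 'n"
  assumes "ustar \<noteq> 0"
    and "spurious_stationary ustar u"
    and "w = ustar - u \<or> w = - ustar - u"
  shows "second_subderiv (rpca_f ustar) u w = ereal (- (l1norm ustar)\<^sup>2)
         \<and> (INF z. parabolic_subderiv (rpca_f ustar) u w z) = ereal (- (l1norm ustar)\<^sup>2)
         \<and> (\<forall>\<epsilon>>0. \<exists>z. parabolic_subderiv (rpca_f ustar) u w z < ereal (- (l1norm ustar)\<^sup>2 + \<epsilon>))
         \<and> ((\<lambda>t. (rpca_f ustar (u + t *\<^sub>R w) - rpca_f ustar u - t * dirderiv (rpca_f ustar) u w)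
                  / (t\<^sup>2 / 2)) \<longlongrightarrow> - (l1norm ustar)\<^sup>2) (at_right 0)
         \<and> - (l1norm ustar)\<^sup>2 < 0"
proof -
  define c where "c = (l1norm ustar)\<^sup>2"
  have quadratic: "\<forall>\<^sub>F t in at_right 0. rpca_f ustar (u + t *\<^sub>R w) = rpca_f ustar u - c * t\<^sup>2 / 2"
    unfolding c_def by (rule spurious_stationary_quadratic_along(1)[OF assms(2,3)])
  have norm_w: "(l1norm w)\<^sup>2 = c"
    unfolding c_def spurious_stationary_quadratic_along(2)[OF assms(2,3)] ..
  have lower: "- (t\<^sup>2 / 2 * (l1norm v)\<^sup>2)
      \<le> rpca_f ustar (u + t *\<^sub>R v) - rpca_f ustar u - t * dirderiv (rpca_f ustar) u v" if "0 < t" for t v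
    using rpca_f_second_order_ge[OF that] by (simp add: dirderiv_rpca_f)
  have "stationary ustar u"
    using assms(2) by (simp add: spurious_stationary_def)
  then have INF_eq: "(INF z. parabolic_subderiv (rpca_f ustar) u w z) = ereal (- c)"
    by (intro INF_parabolic_subderiv_eqI[OF quadratic stationary_rpca_f_ge l1norm_scaleR
          isCont_l1norm norm_w])
  have "\<exists>z. parabolic_subderiv (rpca_f ustar) u w z < ereal (- c + \<epsilon>)" if "0 < \<epsilon>" for \<epsilon>
  proof -
    have "(INF z. parabolic_subderiv (rpca_f ustar) u w z) < ereal (- c + \<epsilon>)"
      using INF_eq that by simp
    then show ?thesis
      unfolding INF_less_iff by blast
  qed
  then show ?thesis
    unfolding c_def[symmetric]
    using second_subderiv_eqI[OF quadratic lower isCont_l1norm norm_w] INF_eq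
      tendsto_eventually[OF second_quotient_eq_if_quadratic[OF quadratic]]
      l1norm_pos[OF assms(1)]
    by (simp add: c_def)
qed

end
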